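(* Fix $M>0$ and $m\in(-1,0)$, and let $-2<a_2<a_1<0$. For $j=1,2$ let $r_j(x)=a_jx/(1+x)$, $$\alpha_{+j}=\frac{M}{r_j(M)}-\frac{r_j(M)}{2a_j r_j(m)},\qquad \beta_{+j}=\frac{M}{r_j(M)}+\frac{r_j(M)}{2a_j r_j(m)}=\frac{1+M}{a_j}+\frac{M(m+1)}{2a_jm(1+M)},$$ and assume $\beta_{+1}<0$ and $\beta_{+2}<0$. Define $z_{+j}(s)=M$ for $s\le\alpha_{+j}$, $z_{+j}(s)=M+\frac{a_j r_j(m)}{2}(s-\alpha_{+j})^2$ for $\alpha_{+j}\le s\le\beta_{+j}$, and $z_{+j}(s)=r_j(M)s$ for $\beta_{+j}\le s\le 0$. Then $z_{+1}(s)\le z_{+2}(s)$ for all $s\in[-1,0]$. *)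

theory Defs
  imports Complex_Main
begin

definition r_fun :: "real \<Rightarrow> real \<Rightarrow> real" where
  "r_fun a x = a * x / (1 + x)"

definition alpha_plus :: "real \<Rightarrow> real \<Rightarrow> real \<Rightarrow> real" where
  "alpha_plus a M m = M / r_fun a M - r_fun a M / (2 * a * r_fun a m)"

definition beta_plus :: "real \<Rightarrow> real \<Rightarrow> real \<Rightarrow> real" where
  "beta_plus a M m = M / r_fun a M + r_fun a M / (2 * a * r_fun a m)"

definition z_plus :: "real \<Rightarrow> real \<Rightarrow> real \<Rightarrow> real \<Rightarrow> real" where
  "z_plus a M m s =
     (if s \<le> alpha_plus a M m then M
      else if s \<le> beta_plus a M m
        then M + a * r_fun a m / 2 * (s - alpha_plus a M m)^2
      else r_fun a M * s)"

end

theory Submission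
  imports Defs
begin

(* Every piece of z_+ depends on s only through a s, so replacing a by c a with c > 0
   amounts to replacing s by c s; in particular z_+1(s) = z_+2((a1/a2) s).  For a < 0 the
   profile is nonincreasing in s: the plateau M, then a downward parabola with vertex at
   alpha_+, then the line r(M) s of negative slope, glued continuously at beta_+.  As
   (a1/a2) s >= s for s <= 0, the inequality follows. *)

lemma antimono_plateau_parabola_line:
  fixes M k \<alpha> \<beta> :: real and L :: "real \<Rightarrow> real"
  assumes "k \<le> 0" and "\<alpha> \<le> \<beta>" and "antimono L" and "L \<beta> = M + k * (\<beta> - \<alpha>)\<^sup>2"
  shows "antimono (\<lambda>s. if s \<le> \<alpha> then M else if s \<le> \<beta> then M + k * (s - \<alpha>)\<^sup>2 else L s)"
    (is "antimono ?z")
proof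
  have parabola_antimono: "M + k * (v - \<alpha>)\<^sup>2 \<le> M + k * (u - \<alpha>)\<^sup>2" if "\<alpha> \<le> u" "u \<le> v" for u v
  proof -
    have "(u - \<alpha>)\<^sup>2 \<le> (v - \<alpha>)\<^sup>2" using that by (intro power_mono) auto
    then show ?thesis using \<open>k \<le> 0\<close> by (simp add: mult_left_mono_neg)
  qed
  have z_antimono_upto_\<beta>: "?z v \<le> ?z u" if "u \<le> v" "v \<le> \<beta>" for u v
  proof -
    have "M + k * (v - \<alpha>)\<^sup>2 \<le> M" using \<open>k \<le> 0\<close> by (simp add: mult_nonpos_nonneg)
    then show ?thesis using that parabola_antimono[of u v] by auto
  qed
  fix x y :: real
  assume "x \<le> y"
  show "?z y \<le> ?z x"
  proof (cases "y \<le> \<beta>")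
    case True
    then show ?thesis using \<open>x \<le> y\<close> z_antimono_upto_\<beta> by blast
  next
    case False
    then have "?z y = L y" using assms(2) by simp
    also have "\<dots> \<le> L (max x \<beta>)" using \<open>x \<le> y\<close> False \<open>antimono L\<close> by (simp add: antimonoD)
    also have "\<dots> \<le> ?z x"
    proof (cases "x \<le> \<beta>")
      case True
      have "L \<beta> = ?z \<beta>" using assms(2,4) by simp
      then show ?thesis using True z_antimono_upto_\<beta>[of x \<beta>] by (simp add: max_def)
    qed (use assms(2) in \<open>simp add: max_def\<close>)
    finally show ?thesis .
  qed
qed

lemma r_fun_scale: "r_fun (c * a) x = c * r_fun a x"
  by (simp add: r_fun_def)

lemma alpha_plus_scale: "c \<noteq> 0 \<Longrightarrow> alpha_plus (c * a) M m = alpha_plus a M m / c"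
  unfolding alpha_plus_def r_fun_scale by (simp add: diff_divide_distrib mult_ac)

lemma beta_plus_scale: "c \<noteq> 0 \<Longrightarrow> beta_plus (c * a) M m = beta_plus a M m / c"
  unfolding beta_plus_def r_fun_scale by (simp add: add_divide_distrib mult_ac)

lemma z_plus_scale:
  assumes "c > 0"
  shows "z_plus (c * a) M m s = z_plus a M m (c * s)"
proof -
  have c0: "c \<noteq> 0" using assms by simp
  have "c * s - alpha_plus a M m = c * (s - alpha_plus a M m / c)"
    using c0 by (simp add: field_simps)
  then have parabola: "c * a * r_fun (c * a) m / 2 * (s - alpha_plus a M m / c)\<^sup>2
      = a * r_fun a m / 2 * (c * s - alpha_plus a M m)\<^sup>2"
    by (simp add: r_fun_scale power_mult_distrib power2_eq_square)
  have line: "r_fun (c * a) M * s = r_fun a M * (c * s)"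
    by (simp add: r_fun_scale)
  have "s \<le> x / c \<longleftrightarrow> c * s \<le> x" for x
    using assms by (simp add: pos_le_divide_eq mult.commute)
  then show ?thesis
    unfolding z_plus_def alpha_plus_scale[OF c0] beta_plus_scale[OF c0] parabola line by simp
qed

lemma beta_plus_minus_alpha_plus: "beta_plus a M m - alpha_plus a M m = r_fun a M / (a * r_fun a m)"
  unfolding alpha_plus_def beta_plus_def by (simp add: field_simps)

lemma z_plus_pieces_agree_at_beta:
  assumes "r_fun a M \<noteq> 0" and "a * r_fun a m \<noteq> 0"
  shows "r_fun a M * beta_plus a M m
    = M + a * r_fun a m / 2 * (beta_plus a M m - alpha_plus a M m)\<^sup>2"
  using assms unfolding beta_plus_minus_alpha_plus
  by (simp add: beta_plus_def field_simps power2_eq_square)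

lemma antimono_z_plus:
  assumes "a < 0" and "M > 0" and "-1 < m" and "m < 0"
  shows "antimono (z_plus a M m)"
proof -
  have slope_neg: "r_fun a M < 0"
    using assms by (simp add: r_fun_def divide_neg_pos mult_neg_pos)
  have curvature_neg: "a * r_fun a m < 0"
  proof -
    have "a * a * m < 0" using assms by (intro mult_pos_neg) (simp_all add: mult_neg_neg)
    then show ?thesis using assms by (simp add: r_fun_def divide_neg_pos mult.assoc)
  qed
  have "0 < beta_plus a M m - alpha_plus a M m"
    unfolding beta_plus_minus_alpha_plus using slope_neg curvature_neg by (rule divide_neg_neg)
  then have "alpha_plus a M m \<le> beta_plus a M m" by simp
  moreover have "antimono (\<lambda>s. r_fun a M * s)"
    using slope_neg by (intro antimonoI) (simp add: mult_left_mono_neg)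
  moreover have "r_fun a M * beta_plus a M m
      = M + a * r_fun a m / 2 * (beta_plus a M m - alpha_plus a M m)\<^sup>2"
    using slope_neg curvature_neg by (intro z_plus_pieces_agree_at_beta) auto
  ultimately have "antimono (\<lambda>s. if s \<le> alpha_plus a M m then M
      else if s \<le> beta_plus a M m then M + a * r_fun a m / 2 * (s - alpha_plus a M m)\<^sup>2
      else r_fun a M * s)"
    using curvature_neg by (intro antimono_plateau_parabola_line) auto
  then show ?thesis
    unfolding z_plus_def by simp
qed

theorem lemma3p8:
  fixes M m a1 a2 :: real
  assumes "M > 0" and "-1 < m" and "m < 0"
    and "-2 < a2" and "a2 < a1" and "a1 < 0"
    and "beta_plus a1 M m < 0" and "beta_plus a2 M m < 0"
  shows "\<forall>s\<in>{-1..0}. z_plus a1 M m s \<le> z_plus a2 M m s"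
proof
  fix s :: real
  assume "s \<in> {-1..0}"
  define c where "c = a1 / a2"
  have "0 < c" "c \<le> 1" and a1_eq: "a1 = c * a2"
    using assms(5,6) by (auto simp: c_def divide_le_eq_1 field_simps)
  then have "s \<le> c * s"
    using \<open>s \<in> {-1..0}\<close> by (simp add: mult_le_cancel_right1)
  then have "z_plus a2 M m (c * s) \<le> z_plus a2 M m s"
    using antimono_z_plus[of a2 M m] assms by (simp add: antimonoD)
  then show "z_plus a1 M m s \<le> z_plus a2 M m s"
    unfolding a1_eq z_plus_scale[OF \<open>0 < c\<close>] .
qed

end
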